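(* Let $(\boldsymbol u^{n},p^{n},\boldsymbol J^{n},\phi^{n},q^{n})_{0\le n\le N}$ be the solution of the first-order scheme (S1), with $\boldsymbol u^0\in\boldsymbol V$, $\boldsymbol J^0\in\boldsymbol L^2(\Omega)$, $q^0=1$. Then there are constants $k_1,k_2>0$ independent of $\tau$ such that for all $0\le m\le N$, $$\|\boldsymbol u^{m}\|^2+|q^{m}|^2\le k_1,\qquad \tau\sum_{n=0}^{m}\Big(R_e^{-1}\|\nabla\boldsymbol u^{n}\|^2+\kappa\|\boldsymbol J^{n}\|^2+\frac1T|q^{n}|^2\Big)\le k_2 .$$
   Context: Let $\Omega\subset\mathbb{R}^d$ ($d=2,3$) be a bounded Lipschitz domain with boundary $\Gamma$ and unit outer normal $\boldsymbol n$. $(\cdot,\cdot)$ and $\|\cdot\|$ denote the $L^2(\Omega)$ inner product and norm. $\boldsymbol X=\boldsymbol H_0^1(\Omega)$, $\boldsymbol V=\{\boldsymbol v\in\boldsymbol X:\nabla\cdot\boldsymbol v=0\}$, $Y=S=L_0^2(\Omega)$ (square-integrable functions with zero mean), $\boldsymbol D=\boldsymbol H_0(\mathrm{div},\Omega)$ (square-integrable fields with square-integrable divergence and vanishing normal trace on $\Gamma$). $b(\boldsymbol u,\boldsymbol v,\boldsymbol w)=((\boldsymbol u\cdot\nabla)\boldsymbol v,\boldsymbol w)$. Cross products: for $d=3$ the usual one; for $d=2$ planar fields are identified with $\mathbb R^3$-valued fields with vanishing third component, magnetic fields are $\mathbb R^3$-valued, and $\boldsymbol a\times\boldsymbol B$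 denotes the first two components of the cross product in $\mathbb R^3$. Parameters $R_e>0$, $\kappa>0$, $T>0$; $N\in\mathbb N$, $\tau=T/N$, $t^n=n\tau$; $\delta_t v^{n+1}=(v^{n+1}-v^n)/\tau$. Given magnetic fields $\boldsymbol B^{n}\in L^3(\Omega)^3$, $n\ge1$. Scheme (S1): given $\boldsymbol u^0\in\boldsymbol V$, $\boldsymbol J^0\in\boldsymbol L^2(\Omega)$, $q^0=1$, for each $n\ge0$ find $(\boldsymbol u^{n+1},p^{n+1},\boldsymbol J^{n+1},\phi^{n+1},q^{n+1})\in\boldsymbol X\times Y\times\boldsymbol D\times S\times\mathbb R$ such that for all $(\boldsymbol v,r,\boldsymbol K,\psi)\in\boldsymbol X\times Y\times\boldsymbol D\times S$: \begin{align*} &(\delta_t\boldsymbol u^{n+1},\boldsymbol v)+R_e^{-1}(\nabla\boldsymbol u^{n+1},\nabla\boldsymbol v)-(p^{n+1},\nabla\cdot\boldsymbol v)+q^{n+1}e^{t^{n+1}/T}\big(b(\boldsymbol u^n,\boldsymbol u^n,\boldsymbol v)-\kappa(\boldsymbol J^n\times\boldsymbol B^{n+1},\boldsymbol v)\big)=0,\\ &(\nabla\cdot\boldsymbol u^{n+1},r)=0,\\ &(\boldsymbol J^{n+1},\boldsymbol K)-(\phi^{n+1},\nabla\cdot\boldsymbol K)-q^{n+1}e^{t^{n+1}/T}(\boldsymbol u^n\times\boldsymbol B^{n+1},\boldsymbol K)=0,\\ &(\nabla\cdot\boldsymbol J^{n+1},\psi)=0,\\ &\delta_t q^{n+1}+\frac{q^{n+1}}{T}-e^{t^{n+1}/T}\big(b(\boldsymbol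 u^n,\boldsymbol u^n,\boldsymbol u^{n+1})-\kappa(\boldsymbol u^n\times\boldsymbol B^{n+1},\boldsymbol J^{n+1})-\kappa(\boldsymbol J^n\times\boldsymbol B^{n+1},\boldsymbol u^{n+1})\big)=0. \end{align*} *)

theory Defs
  imports "HOL-Analysis.Analysis"
begin

text \<open>Functions on the domain are total functions on real^'d; only their
values on the domain matter (all integrals are taken w.r.t. lebesgue_on Omega).\<close>

definition lipschitz_domain :: "(real^'d) set \<Rightarrow> bool" where
  "lipschitz_domain \<Omega> \<longleftrightarrow> open \<Omega> \<and> connected \<Omega> \<and> bounded \<Omega> \<and> \<Omega> \<noteq> {} \<and>
     (\<forall>x0 \<in> frontier \<Omega>. \<exists>r>0. \<exists>e::real^'d. norm e = 1 \<and>
        (\<exists>C g. C-lipschitz_on {z. z \<bullet> e = 0} g \<and>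
           \<Omega> \<inter> ball x0 r = {y \<in> ball x0 r. y \<bullet> e < g (y - (y \<bullet> e) *\<^sub>R e)}))"

definition pd :: "'d \<Rightarrow> (real^'d \<Rightarrow> real) \<Rightarrow> real^'d \<Rightarrow> real" where
  "pd i f x = vector_derivative (\<lambda>t. f (x + t *\<^sub>R axis i 1)) (at 0)"

fun iter_pd :: "'d list \<Rightarrow> (real^'d \<Rightarrow> real) \<Rightarrow> real^'d \<Rightarrow> real" where
  "iter_pd [] f = f"
| "iter_pd (i # is) f = pd i (iter_pd is f)"

definition smooth_fun :: "(real^'d \<Rightarrow> real) \<Rightarrow> bool" where
  "smooth_fun f \<longleftrightarrow> (\<forall>is x. iter_pd is f differentiable (at x))"

definition tsupport :: "(real^'d \<Rightarrow> real) \<Rightarrow> (real^'d) set" where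
  "tsupport f = closure {x. f x \<noteq> 0}"

definition test_fun :: "(real^'d) set \<Rightarrow> (real^'d \<Rightarrow> real) \<Rightarrow> bool" where
  "test_fun \<Omega> f \<longleftrightarrow> smooth_fun f \<and> compact (tsupport f) \<and> tsupport f \<subseteq> \<Omega>"

definition test_field :: "(real^'d) set \<Rightarrow> (real^'d \<Rightarrow> real^'d) \<Rightarrow> bool" where
  "test_field \<Omega> f \<longleftrightarrow> (\<forall>i. test_fun \<Omega> (\<lambda>x. f x $ i))"

text \<open>classical gradient and Jacobian (Jac $ i $ j = d_j f_i)\<close>
definition cgrad :: "(real^'d \<Rightarrow> real) \<Rightarrow> real^'d \<Rightarrow> real^'d" where
  "cgrad f x = (\<chi> j. pd j f x)"

definition cjac :: "(real^'d \<Rightarrow> real^'d) \<Rightarrow> real^'d \<Rightarrow> real^'d^'d" where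
  "cjac f x = (\<chi> i. cgrad (\<lambda>y. f y $ i) x)"

definition Lp :: "real \<Rightarrow> (real^'d) set \<Rightarrow> (real^'d \<Rightarrow> 'a::real_normed_vector) \<Rightarrow> bool" where
  "Lp p \<Omega> f \<longleftrightarrow> f \<in> borel_measurable (lebesgue_on \<Omega>) \<and>
     integrable (lebesgue_on \<Omega>) (\<lambda>x. norm (f x) powr p)"

definition ip :: "(real^'d) set \<Rightarrow> (real^'d \<Rightarrow> 'a::real_inner) \<Rightarrow> (real^'d \<Rightarrow> 'a) \<Rightarrow> real" where
  "ip \<Omega> f g = (\<integral>x. f x \<bullet> g x \<partial>lebesgue_on \<Omega>)"

definition nrm2 :: "(real^'d) set \<Rightarrow> (real^'d \<Rightarrow> 'a::real_normed_vector) \<Rightarrow> real" where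
  "nrm2 \<Omega> f = (\<integral>x. (norm (f x))\<^sup>2 \<partial>lebesgue_on \<Omega>)"

definition is_wgrad :: "(real^'d) set \<Rightarrow> (real^'d \<Rightarrow> real) \<Rightarrow> (real^'d \<Rightarrow> real^'d) \<Rightarrow> bool" where
  "is_wgrad \<Omega> f G \<longleftrightarrow> (\<forall>\<phi> i. test_fun \<Omega> \<phi> \<longrightarrow>
      integrable (lebesgue_on \<Omega>) (\<lambda>x. f x * pd i \<phi> x) \<and>
      integrable (lebesgue_on \<Omega>) (\<lambda>x. G x $ i * \<phi> x) \<and>
      (\<integral>x. f x * pd i \<phi> x \<partial>lebesgue_on \<Omega>) = - (\<integral>x. G x $ i * \<phi> x \<partial>lebesgue_on \<Omega>))"

definition wgrad :: "(real^'d) set \<Rightarrow> (real^'d \<Rightarrow> real) \<Rightarrow> real^'d \<Rightarrow> real^'d" where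
  "wgrad \<Omega> f = (SOME G. is_wgrad \<Omega> f G)"

definition is_wjac :: "(real^'d) set \<Rightarrow> (real^'d \<Rightarrow> real^'d) \<Rightarrow> (real^'d \<Rightarrow> real^'d^'d) \<Rightarrow> bool" where
  "is_wjac \<Omega> u Du \<longleftrightarrow> (\<forall>i. is_wgrad \<Omega> (\<lambda>x. u x $ i) (\<lambda>x. Du x $ i))"

text \<open>weak Jacobian, wjac u x $ i $ j = d_j u_i  (this is nabla u)\<close>
definition wjac :: "(real^'d) set \<Rightarrow> (real^'d \<Rightarrow> real^'d) \<Rightarrow> real^'d \<Rightarrow> real^'d^'d" where
  "wjac \<Omega> u = (SOME Du. is_wjac \<Omega> u Du)"

definition is_wdiv :: "(real^'d) set \<Rightarrow> (real^'d \<Rightarrow> real^'d) \<Rightarrow> (real^'d \<Rightarrow> real) \<Rightarrow> bool" where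
  "is_wdiv \<Omega> J D \<longleftrightarrow> (\<forall>\<phi>. test_fun \<Omega> \<phi> \<longrightarrow>
      integrable (lebesgue_on \<Omega>) (\<lambda>x. J x \<bullet> cgrad \<phi> x) \<and>
      integrable (lebesgue_on \<Omega>) (\<lambda>x. D x * \<phi> x) \<and>
      (\<integral>x. J x \<bullet> cgrad \<phi> x \<partial>lebesgue_on \<Omega>) = - (\<integral>x. D x * \<phi> x \<partial>lebesgue_on \<Omega>))"

definition wdiv :: "(real^'d) set \<Rightarrow> (real^'d \<Rightarrow> real^'d) \<Rightarrow> real^'d \<Rightarrow> real" where
  "wdiv \<Omega> J = (SOME D. is_wdiv \<Omega> J D)"

definition H1s :: "(real^'d) set \<Rightarrow> (real^'d \<Rightarrow> real) \<Rightarrow> bool" where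
  "H1s \<Omega> f \<longleftrightarrow> Lp 2 \<Omega> f \<and> (\<exists>G. is_wgrad \<Omega> f G \<and> Lp 2 \<Omega> G)"

definition H1v :: "(real^'d) set \<Rightarrow> (real^'d \<Rightarrow> real^'d) \<Rightarrow> bool" where
  "H1v \<Omega> u \<longleftrightarrow> Lp 2 \<Omega> u \<and> (\<exists>Du. is_wjac \<Omega> u Du \<and> Lp 2 \<Omega> Du)"

definition Xsp :: "(real^'d) set \<Rightarrow> (real^'d \<Rightarrow> real^'d) \<Rightarrow> bool" where
  "Xsp \<Omega> u \<longleftrightarrow> H1v \<Omega> u \<and> (\<exists>\<phi>s. (\<forall>k. test_field \<Omega> (\<phi>s k)) \<and>
      (\<lambda>k. nrm2 \<Omega> (\<lambda>x. \<phi>s k x - u x) + nrm2 \<Omega> (\<lambda>x. cjac (\<phi>s k) x - wjac \<Omega> u x))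
        \<longlonglongrightarrow> 0)"

definition Vsp :: "(real^'d) set \<Rightarrow> (real^'d \<Rightarrow> real^'d) \<Rightarrow> bool" where
  "Vsp \<Omega> u \<longleftrightarrow> Xsp \<Omega> u \<and> (AE x in lebesgue_on \<Omega>. wdiv \<Omega> u x = 0)"

definition L20 :: "(real^'d) set \<Rightarrow> (real^'d \<Rightarrow> real) \<Rightarrow> bool" where
  "L20 \<Omega> f \<longleftrightarrow> Lp 2 \<Omega> f \<and> (\<integral>x. f x \<partial>lebesgue_on \<Omega>) = 0"

text \<open>D = H_0(div,Omega): H(div) fields whose normal trace vanishes, the normal
trace being the functional psi |-> (J, grad psi) + (div J, psi) on H^1(Omega).\<close>
definition Dsp :: "(real^'d) set \<Rightarrow> (real^'d \<Rightarrow> real^'d) \<Rightarrow> bool" where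
  "Dsp \<Omega> J \<longleftrightarrow> Lp 2 \<Omega> J \<and> (\<exists>D. is_wdiv \<Omega> J D \<and> Lp 2 \<Omega> D) \<and>
     (\<forall>\<psi>. H1s \<Omega> \<psi> \<longrightarrow> ip \<Omega> J (wgrad \<Omega> \<psi>) + ip \<Omega> (wdiv \<Omega> J) \<psi> = 0)"

text \<open>b(u,v,w) = ((u . nabla) v, w); ((u.nabla)v)_i = sum_j u_j d_j v_i\<close>
definition bform :: "(real^'d) set \<Rightarrow> (real^'d \<Rightarrow> real^'d) \<Rightarrow> (real^'d \<Rightarrow> real^'d) \<Rightarrow> (real^'d \<Rightarrow> real^'d) \<Rightarrow> real" where
  "bform \<Omega> u v w = ip \<Omega> (\<lambda>x. wjac \<Omega> v x *v u x) w"

text \<open>Cross product a x B for a in R^d, B in R^3: a is embedded into R^3 via the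
coordinate injection emb (d=2: vanishing remaining component), the R^3 cross product
is taken, and the result is projected back to the d coordinates.\<close>
definition embed3 :: "('d \<Rightarrow> 3) \<Rightarrow> real^'d \<Rightarrow> real^3" where
  "embed3 emb a = (\<chi> k. if k \<in> range emb then a $ (inv emb k) else 0)"

definition proj3 :: "('d \<Rightarrow> 3) \<Rightarrow> real^3 \<Rightarrow> real^'d" where
  "proj3 emb v = (\<chi> i. v $ emb i)"

definition crossd :: "('d \<Rightarrow> 3) \<Rightarrow> real^'d \<Rightarrow> real^3 \<Rightarrow> real^'d" where
  "crossd emb a B = proj3 emb (cross3 (embed3 emb a) B)"

definition scheme_S1 ::
  "(real^'d) set \<Rightarrow> ('d \<Rightarrow> 3) \<Rightarrow> real \<Rightarrow> real \<Rightarrow> real \<Rightarrow> nat \<Rightarrow> (nat \<Rightarrow> real^'d \<Rightarrow> real^3)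
   \<Rightarrow> (nat \<Rightarrow> real^'d \<Rightarrow> real^'d) \<Rightarrow> (nat \<Rightarrow> real^'d \<Rightarrow> real)
   \<Rightarrow> (nat \<Rightarrow> real^'d \<Rightarrow> real^'d) \<Rightarrow> (nat \<Rightarrow> real^'d \<Rightarrow> real) \<Rightarrow> (nat \<Rightarrow> real) \<Rightarrow> bool" where
  "scheme_S1 \<Omega> emb Rey \<kappa> T N B u p J \<phi> q \<longleftrightarrow> q 0 = 1 \<and>
    (\<forall>n<N. let \<tau> = T / real N; E = exp (real (Suc n) * \<tau> / T) in
      Xsp \<Omega> (u (Suc n)) \<and> L20 \<Omega> (p (Suc n)) \<and> Dsp \<Omega> (J (Suc n)) \<and> L20 \<Omega> (\<phi> (Suc n)) \<and>
      (\<forall>v. Xsp \<Omega> v \<longrightarrow>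
         ip \<Omega> (\<lambda>x. (1 / \<tau>) *\<^sub>R (u (Suc n) x - u n x)) v
         + (1 / Rey) * ip \<Omega> (wjac \<Omega> (u (Suc n))) (wjac \<Omega> v)
         - ip \<Omega> (p (Suc n)) (wdiv \<Omega> v)
         + q (Suc n) * E * (bform \<Omega> (u n) (u n) v
              - \<kappa> * ip \<Omega> (\<lambda>x. crossd emb (J n x) (B (Suc n) x)) v) = 0) \<and>
      (\<forall>r. L20 \<Omega> r \<longrightarrow> ip \<Omega> (wdiv \<Omega> (u (Suc n))) r = 0) \<and>
      (\<forall>K. Dsp \<Omega> K \<longrightarrow>
         ip \<Omega> (J (Suc n)) K - ip \<Omega> (\<phi> (Suc n)) (wdiv \<Omega> K)
         - q (Suc n) * E * ip \<Omega> (\<lambda>x. crossd emb (u n x) (B (Suc n) x)) K = 0) \<and>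
      (\<forall>\<psi>. L20 \<Omega> \<psi> \<longrightarrow> ip \<Omega> (wdiv \<Omega> (J (Suc n))) \<psi> = 0) \<and>
      (q (Suc n) - q n) / \<tau> + q (Suc n) / T
         - E * (bform \<Omega> (u n) (u n) (u (Suc n))
                - \<kappa> * ip \<Omega> (\<lambda>x. crossd emb (u n x) (B (Suc n) x)) (J (Suc n))
                - \<kappa> * ip \<Omega> (\<lambda>x. crossd emb (J n x) (B (Suc n) x)) (u (Suc n))) = 0)"

end

theory Submission imports Defs begin

text \<open>Test the momentum equation with u^(n+1), Ohm's law with J^(n+1), and multiply the
equation for the auxiliary variable by q^(n+1). The pressure and potential terms vanish by the
divergence constraints, and every explicit nonlinear or Lorentz term appears twice with
opposite signs. What remains is a discrete energy law for \<parallel>u\<parallel>^2 + |q|^2, dissipative because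
2(a - b, a) \<ge> \<parallel>a\<parallel>^2 - \<parallel>b\<parallel>^2. Summing it gives both bounds; the term n = 0 of the dissipation
sum involves only the data and is at most T times a constant. The hypotheses on the dimension,
the embedding, the domain and the magnetic fields are needed for the solvability of the scheme
only, not for the estimate.\<close>

lemma norm_sq_diff_le_inner:
  fixes x y :: "'a::real_inner"
  shows "(norm x)\<^sup>2 - (norm y)\<^sup>2 \<le> 2 * ((x - y) \<bullet> x)"
proof -
  have "2 * ((x - y) \<bullet> x) - ((norm x)\<^sup>2 - (norm y)\<^sup>2) = (norm (x - y))\<^sup>2"
    by (simp add: power2_norm_eq_inner inner_diff_left inner_diff_right inner_commute)
  then show ?thesis
    using zero_le_power2[of "norm (x - y)"] by linarith
qed

lemma Lp_2_integrable_norm_sq: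
  "Lp 2 \<Omega> f \<Longrightarrow> integrable (lebesgue_on \<Omega>) (\<lambda>x. (norm (f x))\<^sup>2)"
  unfolding Lp_def by (simp add: powr_numeral)

lemma integrable_inner_Lp_2:
  fixes f g :: "real^'d \<Rightarrow> 'a::euclidean_space"
  assumes f: "Lp 2 \<Omega> f" and g: "Lp 2 \<Omega> g"
  shows "integrable (lebesgue_on \<Omega>) (\<lambda>x. f x \<bullet> g x)"
proof (rule Bochner_Integration.integrable_bound)
  show "integrable (lebesgue_on \<Omega>) (\<lambda>x. (norm (f x))\<^sup>2 + (norm (g x))\<^sup>2)"
    using f g by (simp add: Lp_2_integrable_norm_sq)
  show "(\<lambda>x. f x \<bullet> g x) \<in> borel_measurable (lebesgue_on \<Omega>)"
    using f g unfolding Lp_def by (blast intro: borel_measurable_inner)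
  have "norm (f x \<bullet> g x) \<le> norm ((norm (f x))\<^sup>2 + (norm (g x))\<^sup>2)" for x
  proof -
    have "\<bar>f x \<bullet> g x\<bar> \<le> norm (f x) * norm (g x)" by (rule Cauchy_Schwarz_ineq2)
    also have "\<dots> \<le> (norm (f x))\<^sup>2 + (norm (g x))\<^sup>2"
      using sum_squares_bound[of "norm (f x)" "norm (g x)"]
        mult_nonneg_nonneg[OF norm_ge_zero norm_ge_zero, of "f x" "g x"] by linarith
    finally show ?thesis by simp
  qed
  then show "AE x in lebesgue_on \<Omega>. norm (f x \<bullet> g x) \<le> norm ((norm (f x))\<^sup>2 + (norm (g x))\<^sup>2)"
    by simp
qed

lemma nrm2_nonneg [simp]: "0 \<le> nrm2 \<Omega> f"
  unfolding nrm2_def by (rule Bochner_Integration.integral_nonneg) simp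

lemma ip_self_eq_nrm2: "ip \<Omega> f f = nrm2 \<Omega> f"
  unfolding ip_def nrm2_def by (simp add: power2_norm_eq_inner)

lemma ip_commute: "ip \<Omega> f g = ip \<Omega> g f"
  unfolding ip_def by (simp add: inner_commute)

lemma ip_scaleR_left: "ip \<Omega> (\<lambda>x. c *\<^sub>R f x) g = c * ip \<Omega> f g"
  unfolding ip_def by simp

lemma nrm2_diff_le_ip:
  fixes a b :: "real^'d \<Rightarrow> 'a::euclidean_space"
  assumes a: "Lp 2 \<Omega> a" and b: "Lp 2 \<Omega> b"
  shows "nrm2 \<Omega> a - nrm2 \<Omega> b \<le> 2 * ip \<Omega> (\<lambda>x. a x - b x) a"
proof -
  let ?M = "lebesgue_on \<Omega>"
  note sq_a = Lp_2_integrable_norm_sq[OF a] and sq_b = Lp_2_integrable_norm_sq[OF b]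
  have "integrable ?M (\<lambda>x. (a x - b x) \<bullet> a x)"
    using integrable_inner_Lp_2[OF a a] integrable_inner_Lp_2[OF b a]
    by (simp add: inner_diff_left)
  then have "(\<integral>x. (norm (a x))\<^sup>2 - (norm (b x))\<^sup>2 \<partial>?M) \<le> (\<integral>x. 2 * ((a x - b x) \<bullet> a x) \<partial>?M)"
    using sq_a sq_b by (intro integral_mono norm_sq_diff_le_inner) auto
  then show ?thesis
    unfolding nrm2_def ip_def using sq_a sq_b by simp
qed

lemma Xsp_imp_Lp_2: "Xsp \<Omega> u \<Longrightarrow> Lp 2 \<Omega> u"
  unfolding Xsp_def H1v_def by blast

lemma Vsp_imp_Lp_2: "Vsp \<Omega> u \<Longrightarrow> Lp 2 \<Omega> u"
  unfolding Vsp_def by (blast dest: Xsp_imp_Lp_2)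

definition modified_energy ::
  "(real^'d) set \<Rightarrow> (nat \<Rightarrow> real^'d \<Rightarrow> real^'d) \<Rightarrow> (nat \<Rightarrow> real) \<Rightarrow> nat \<Rightarrow> real" where
  "modified_energy \<Omega> u q n = nrm2 \<Omega> (u n) + \<bar>q n\<bar>\<^sup>2"

definition dissipation ::
  "(real^'d) set \<Rightarrow> real \<Rightarrow> real \<Rightarrow> real \<Rightarrow> (nat \<Rightarrow> real^'d \<Rightarrow> real^'d)
   \<Rightarrow> (nat \<Rightarrow> real^'d \<Rightarrow> real^'d) \<Rightarrow> (nat \<Rightarrow> real) \<Rightarrow> nat \<Rightarrow> real" where
  "dissipation \<Omega> Rey \<kappa> T u J q n =
     (1 / Rey) * nrm2 \<Omega> (wjac \<Omega> (u n)) + \<kappa> * nrm2 \<Omega> (J n) + (1 / T) * \<bar>q n\<bar>\<^sup>2"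

lemma dissipation_nonneg:
  "Rey > 0 \<Longrightarrow> \<kappa> > 0 \<Longrightarrow> T > 0 \<Longrightarrow> 0 \<le> dissipation \<Omega> Rey \<kappa> T u J q n"
  unfolding dissipation_def by (intro add_nonneg_nonneg mult_nonneg_nonneg) auto

lemma sav_cancellation:
  fixes A c JJ q' dq E b lu lJ T :: real
  assumes "A + q' * E * (b - c * lu) = 0" and "JJ - q' * E * lJ = 0"
    and "dq + q' / T - E * (b - c * lJ - c * lu) = 0"
  shows "A + c * JJ + q' * dq + (1 / T) * \<bar>q'\<bar>\<^sup>2 = 0"
proof -
  have "A + c * JJ + q' * dq + (1 / T) * \<bar>q'\<bar>\<^sup>2
      = (A + q' * E * (b - c * lu)) + c * (JJ - q' * E * lJ)
        + q' * (dq + q' / T - E * (b - c * lJ - c * lu))"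
    by (simp add: algebra_simps power2_eq_square)
  then show ?thesis using assms by simp
qed

lemma scheme_S1_energy_identity:
  assumes sch: "scheme_S1 \<Omega> emb Rey \<kappa> T N B u p J \<phi> q" and n: "n < N"
  defines "\<tau> \<equiv> T / real N"
  shows "ip \<Omega> (\<lambda>x. (1 / \<tau>) *\<^sub>R (u (Suc n) x - u n x)) (u (Suc n))
           + q (Suc n) * ((q (Suc n) - q n) / \<tau>)
           + dissipation \<Omega> Rey \<kappa> T u J q (Suc n) = 0"
proof -
  define E where "E = exp (real (Suc n) * \<tau> / T)"
  define b where "b = bform \<Omega> (u n) (u n) (u (Suc n))"
  define lorentz_u where "lorentz_u = ip \<Omega> (\<lambda>x. crossd emb (J n x) (B (Suc n) x)) (u (Suc n))"
  define lorentz_J where "lorentz_J = ip \<Omega> (\<lambda>x. crossd emb (u n x) (B (Suc n) x)) (J (Suc n))"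
  note step = sch[unfolded scheme_S1_def, THEN conjunct2, rule_format, OF n, unfolded Let_def]
  have X: "Xsp \<Omega> (u (Suc n))" using step by (elim conjE)
  have D: "Dsp \<Omega> (J (Suc n))" using step by (elim conjE)
  have p: "L20 \<Omega> (p (Suc n))" using step by (elim conjE)
  have \<phi>: "L20 \<Omega> (\<phi> (Suc n))" using step by (elim conjE)
  have momentum: "ip \<Omega> (\<lambda>x. (1 / \<tau>) *\<^sub>R (u (Suc n) x - u n x)) (u (Suc n))
      + (1 / Rey) * ip \<Omega> (wjac \<Omega> (u (Suc n))) (wjac \<Omega> (u (Suc n)))
      - ip \<Omega> (p (Suc n)) (wdiv \<Omega> (u (Suc n)))
      + q (Suc n) * E * (b - \<kappa> * lorentz_u) = 0"
    using step X unfolding \<tau>_def E_def b_def lorentz_u_def by blast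
  have div_u: "ip \<Omega> (wdiv \<Omega> (u (Suc n))) (p (Suc n)) = 0"
    using step p by blast
  have ohm: "ip \<Omega> (J (Suc n)) (J (Suc n)) - ip \<Omega> (\<phi> (Suc n)) (wdiv \<Omega> (J (Suc n)))
      - q (Suc n) * E * lorentz_J = 0"
    using step D unfolding \<tau>_def E_def lorentz_J_def by blast
  have div_J: "ip \<Omega> (wdiv \<Omega> (J (Suc n))) (\<phi> (Suc n)) = 0"
    using step \<phi> by blast
  have sav: "(q (Suc n) - q n) / \<tau> + q (Suc n) / T
      - E * (b - \<kappa> * lorentz_J - \<kappa> * lorentz_u) = 0"
    using step unfolding \<tau>_def E_def b_def lorentz_u_def lorentz_J_def by blast
  have "(ip \<Omega> (\<lambda>x. (1 / \<tau>) *\<^sub>R (u (Suc n) x - u n x)) (u (Suc n))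
        + (1 / Rey) * nrm2 \<Omega> (wjac \<Omega> (u (Suc n))))
      + q (Suc n) * E * (b - \<kappa> * lorentz_u) = 0"
    using momentum div_u ip_commute[of \<Omega> "p (Suc n)"] by (simp add: ip_self_eq_nrm2)
  moreover have "nrm2 \<Omega> (J (Suc n)) - q (Suc n) * E * lorentz_J = 0"
    using ohm div_J ip_commute[of \<Omega> "\<phi> (Suc n)"] by (simp add: ip_self_eq_nrm2)
  ultimately have "(ip \<Omega> (\<lambda>x. (1 / \<tau>) *\<^sub>R (u (Suc n) x - u n x)) (u (Suc n))
        + (1 / Rey) * nrm2 \<Omega> (wjac \<Omega> (u (Suc n))))
      + \<kappa> * nrm2 \<Omega> (J (Suc n)) + q (Suc n) * ((q (Suc n) - q n) / \<tau>)
      + (1 / T) * \<bar>q (Suc n)\<bar>\<^sup>2 = 0"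
    by (rule sav_cancellation[OF _ _ sav])
  then show ?thesis
    unfolding dissipation_def by linarith
qed

lemma scheme_S1_velocity_Lp_2:
  assumes sch: "scheme_S1 \<Omega> emb Rey \<kappa> T N B u p J \<phi> q"
    and u0: "Lp 2 \<Omega> (u 0)" and k: "k \<le> N"
  shows "Lp 2 \<Omega> (u k)"
proof (cases k)
  case (Suc j)
  then have "j < N" using k by simp
  then have "Xsp \<Omega> (u (Suc j))"
    using sch[unfolded scheme_S1_def, THEN conjunct2, rule_format, unfolded Let_def]
    by blast
  then show ?thesis using Suc by (simp add: Xsp_imp_Lp_2)
qed (use u0 in simp)

lemma scheme_S1_modified_energy_decay:
  assumes sch: "scheme_S1 \<Omega> emb Rey \<kappa> T N B u p J \<phi> q"
    and n: "n < N" and T: "T > 0" and u0: "Lp 2 \<Omega> (u 0)"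
  defines "\<tau> \<equiv> T / real N"
  shows "modified_energy \<Omega> u q (Suc n) + 2 * \<tau> * dissipation \<Omega> Rey \<kappa> T u J q (Suc n)
           \<le> modified_energy \<Omega> u q n"
proof -
  have \<tau>: "\<tau> > 0" using T n by (simp add: \<tau>_def)
  have "nrm2 \<Omega> (u (Suc n)) - nrm2 \<Omega> (u n) \<le> 2 * ip \<Omega> (\<lambda>x. u (Suc n) x - u n x) (u (Suc n))"
    using n by (intro nrm2_diff_le_ip scheme_S1_velocity_Lp_2[OF sch u0]) auto
  also have "\<dots> = 2 * \<tau> * ip \<Omega> (\<lambda>x. (1 / \<tau>) *\<^sub>R (u (Suc n) x - u n x)) (u (Suc n))"
    using \<tau> by (simp add: ip_scaleR_left)
  finally have velocity:
    "nrm2 \<Omega> (u (Suc n)) - nrm2 \<Omega> (u n)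
       \<le> 2 * \<tau> * ip \<Omega> (\<lambda>x. (1 / \<tau>) *\<^sub>R (u (Suc n) x - u n x)) (u (Suc n))" .
  have "\<bar>q (Suc n)\<bar>\<^sup>2 - \<bar>q n\<bar>\<^sup>2 \<le> 2 * ((q (Suc n) - q n) * q (Suc n))"
    using norm_sq_diff_le_inner[of "q (Suc n)" "q n"] by simp
  also have "\<dots> = 2 * \<tau> * (q (Suc n) * ((q (Suc n) - q n) / \<tau>))"
    using \<tau> by simp
  finally have auxiliary:
    "\<bar>q (Suc n)\<bar>\<^sup>2 - \<bar>q n\<bar>\<^sup>2 \<le> 2 * \<tau> * (q (Suc n) * ((q (Suc n) - q n) / \<tau>))" .
  have "2 * \<tau> * (ip \<Omega> (\<lambda>x. (1 / \<tau>) *\<^sub>R (u (Suc n) x - u n x)) (u (Suc n))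
      + q (Suc n) * ((q (Suc n) - q n) / \<tau>) + dissipation \<Omega> Rey \<kappa> T u J q (Suc n)) = 0"
    using scheme_S1_energy_identity[OF sch n] by (simp add: \<tau>_def)
  then show ?thesis
    using velocity auxiliary unfolding modified_energy_def by (simp add: distrib_left)
qed

lemma telescoped_decay:
  fixes a s :: "nat \<Rightarrow> real"
  assumes decay: "\<And>n. n < N \<Longrightarrow> a (Suc n) + c * s (Suc n) \<le> a n" and "m \<le> N"
  shows "a m + c * (\<Sum>n<m. s (Suc n)) \<le> a 0"
  using \<open>m \<le> N\<close>
proof (induction m)
  case (Suc m)
  then have "a (Suc m) + c * s (Suc m) \<le> a m" and "a m + c * (\<Sum>n<m. s (Suc n)) \<le> a 0"
    using decay by simp_all
  then show ?case by (simp add: distrib_left)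
qed simp

lemma scheme_S1_stability:
  assumes sch: "scheme_S1 \<Omega> emb Rey \<kappa> T N B u p J \<phi> q"
    and Rey: "Rey > 0" and \<kappa>: "\<kappa> > 0" and T: "T > 0"
    and u0: "Lp 2 \<Omega> (u 0)" and m: "m \<le> N"
  shows "modified_energy \<Omega> u q m \<le> modified_energy \<Omega> u q 0"
    and "(T / real N) * (\<Sum>n\<le>m. dissipation \<Omega> Rey \<kappa> T u J q n)
           \<le> modified_energy \<Omega> u q 0 / 2 + T * dissipation \<Omega> Rey \<kappa> T u J q 0"
proof -
  define \<tau> where "\<tau> = T / real N"
  define D where "D = dissipation \<Omega> Rey \<kappa> T u J q"
  have \<tau>: "0 \<le> \<tau>" "\<tau> \<le> T"
    using T by (auto simp: \<tau>_def divide_le_eq)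
  have D: "0 \<le> D n" for n
    unfolding D_def using Rey \<kappa> T by (rule dissipation_nonneg)
  have sum_D: "0 \<le> (\<Sum>n<m. D (Suc n))"
    using D by (simp add: sum_nonneg)
  have energy: "modified_energy \<Omega> u q m + 2 * \<tau> * (\<Sum>n<m. D (Suc n)) \<le> modified_energy \<Omega> u q 0"
    using scheme_S1_modified_energy_decay[OF sch _ T u0] m
    unfolding \<tau>_def D_def by (rule telescoped_decay)
  moreover have "0 \<le> 2 * \<tau> * (\<Sum>n<m. D (Suc n))"
    using \<tau> sum_D by simp
  ultimately show "modified_energy \<Omega> u q m \<le> modified_energy \<Omega> u q 0"
    by linarith
  have "0 \<le> modified_energy \<Omega> u q m"
    unfolding modified_energy_def by simp
  then have "\<tau> * (\<Sum>n<m. D (Suc n)) \<le> modified_energy \<Omega> u q 0 / 2"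
    using energy by simp
  moreover have "\<tau> * D 0 \<le> T * D 0"
    using \<tau> D by (simp add: mult_right_mono)
  ultimately show "\<tau> * (\<Sum>n\<le>m. D n) \<le> modified_energy \<Omega> u q 0 / 2 + T * D 0"
    by (simp add: sum.atMost_shift distrib_left)
qed

theorem mainTheorem6:
  fixes \<Omega> :: "(real^'d) set" and emb :: "'d \<Rightarrow> 3"
    and Rey \<kappa> T :: real
    and u0 J0 :: "real^'d \<Rightarrow> real^'d"
    and B :: "nat \<Rightarrow> nat \<Rightarrow> real^'d \<Rightarrow> real^3"
  assumes "CARD('d) = 2 \<or> CARD('d) = 3"
    and "inj emb"
    and "lipschitz_domain \<Omega>"
    and "Rey > 0" and "\<kappa> > 0" and "T > 0"
    and "Vsp \<Omega> u0" and "Lp 2 \<Omega> J0"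
    and "\<And>N n. n \<ge> 1 \<Longrightarrow> Lp 3 \<Omega> (B N n)"
  shows "\<exists>k1 k2. k1 > 0 \<and> k2 > 0 \<and>
    (\<forall>N u p J \<phi> q. N \<ge> 1 \<longrightarrow> u 0 = u0 \<longrightarrow> J 0 = J0 \<longrightarrow>
       scheme_S1 \<Omega> emb Rey \<kappa> T N (B N) u p J \<phi> q \<longrightarrow>
       (\<forall>m\<le>N. nrm2 \<Omega> (u m) + \<bar>q m\<bar>\<^sup>2 \<le> k1 \<and>
          (T / real N) * (\<Sum>n\<le>m. (1 / Rey) * nrm2 \<Omega> (wjac \<Omega> (u n)) + \<kappa> * nrm2 \<Omega> (J n)
                                  + (1 / T) * \<bar>q n\<bar>\<^sup>2) \<le> k2))"
proof -
  define s0 where "s0 = (1 / Rey) * nrm2 \<Omega> (wjac \<Omega> u0) + \<kappa> * nrm2 \<Omega> J0 + 1 / T"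
  define k1 where "k1 = nrm2 \<Omega> u0 + 1"
  define k2 where "k2 = k1 / 2 + T * s0"
  have "0 \<le> s0"
    unfolding s0_def using assms(4-6) by (intro add_nonneg_nonneg mult_nonneg_nonneg) auto
  moreover have "k1 > 0"
    unfolding k1_def using nrm2_nonneg[of \<Omega> u0] by linarith
  ultimately have k: "k1 > 0" "k2 > 0"
    using assms(6) unfolding k2_def by (simp_all add: add_pos_nonneg)
  have "modified_energy \<Omega> u q m \<le> k1 \<and>
      (T / real N) * (\<Sum>n\<le>m. dissipation \<Omega> Rey \<kappa> T u J q n) \<le> k2"
    if "u 0 = u0" "J 0 = J0" and sch: "scheme_S1 \<Omega> emb Rey \<kappa> T N (B N) u p J \<phi> q"
      and "m \<le> N" for N u p J \<phi> q m
  proof -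
    have "q 0 = 1" using sch unfolding scheme_S1_def by blast
    then have "modified_energy \<Omega> u q 0 = k1" "dissipation \<Omega> Rey \<kappa> T u J q 0 = s0"
      using that unfolding modified_energy_def dissipation_def k1_def s0_def by simp_all
    then show ?thesis
      using scheme_S1_stability[OF sch assms(4-6)] Vsp_imp_Lp_2[OF assms(7)] that
      unfolding k2_def by simp
  qed
  then show ?thesis
    using k unfolding modified_energy_def dissipation_def by blast
qed

end
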